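(* Let $L\ge 1$ and $N_\nu\ge 1$ be integers. Suppose there are finitely many paths indexed by $l$, each with a path metric $\mathrm{PM}_l\in\mathbb{R}$ and an LLR vector $\alpha_l=(\alpha_{0,l},\dots,\alpha_{N_\nu-1,l})\in(\mathbb{R}\setminus\{0\})^{N_\nu}$. Assume that for each $l$ the absolute values $|\alpha_{i,l}|$ are pairwise distinct and that the entries are indexed so that $|\alpha_{0,l}|<|\alpha_{1,l}|<\dots<|\alpha_{N_\nu-1,l}|$. A candidate is a pair $(l,\eta)$ with $\eta\in\{+1,-1\}^{N_\nu}$, and its metric is $$M(l,\eta)=\mathrm{PM}_l+\sum_{i=0}^{N_\nu-1}\ln\left(1+e^{-\eta_i\alpha_{i,l}}\right).$$ If a candidate $(l,\eta)$ has $\eta_k\neq \operatorname{sgn}(\alpha_{k,l})$ for some index $k\ge L-1$, then there exist at least $L$ candidates of the form $(l,\eta')$ with $\eta'\neq\eta$ and $M(l,\eta')<M(l,\eta)$. Consequently, every candidate $(l,\eta)$ belonging to some set of $L$ candidates of smallest metric (the set of survivors of successive-cancellation list decoding with list size $L$ over a Rate-1 node) satisfies $\eta_i=\operatorname{sgn}(\alpha_{i,l})$ for all $i\ge L-1$. In other words, path splitting is needed at most at the $\min(L-1,N_\nu)$ least reliable positions of each path, and all remaining bits equal the hard decision on the LLR ($\beta_{i,l}=0$ if $\alpha_{i,l}\ge0$, and $1$ otherwise).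
   Context: Setting: list decoding of a Rate-1 constituent code (all $N_\nu$ bits are information bits) of a polar code. A bit estimate $\beta\in\{0,1\}$ is encoded as $\eta=1-2\beta\in\{+1,-1\}$. $\operatorname{sgn}$ denotes the sign function. In successive-cancellation list decoding with list size $L$, the $L$ candidates of smallest path metric survive. The ordering of LLRs by increasing absolute value is the reliability order, with index $0$ the least reliable. *)

theory Defs
  imports Complex_Main
begin

definition cands :: "'p set \<Rightarrow> nat \<Rightarrow> ('p \<times> real list) set" where
  "cands P N = {(l, eta). l \<in> P \<and> length eta = N \<and> set eta \<subseteq> {1, -1}}"

definition metric :: "('p \<Rightarrow> real) \<Rightarrow> ('p \<Rightarrow> nat \<Rightarrow> real) \<Rightarrow> nat \<Rightarrow> 'p \<Rightarrow> real list \<Rightarrow> real" where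
  "metric PM alpha N l eta = PM l + (\<Sum>i<N. ln (1 + exp (- (eta ! i) * alpha l i)))"

definition survivor_set ::
  "'p set \<Rightarrow> ('p \<Rightarrow> real) \<Rightarrow> ('p \<Rightarrow> nat \<Rightarrow> real) \<Rightarrow> nat \<Rightarrow> nat \<Rightarrow> ('p \<times> real list) set \<Rightarrow> bool" where
  "survivor_set P PM alpha N L S \<longleftrightarrow>
     S \<subseteq> cands P N \<and> card S = min L (card (cands P N)) \<and>
     (\<forall>c\<in>S. \<forall>c'\<in>cands P N - S.
        metric PM alpha N (fst c) (snd c) \<le> metric PM alpha N (fst c') (snd c'))"

end

theory Submission
  imports Defs
begin

text \<open>Since \<open>ln (1 + e\<^sup>x) - ln (1 + e\<^sup>-\<^sup>x) = x\<close>, flipping bit \<open>i\<close> of \<open>\<eta>\<close> changes the metric by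
  exactly \<open>\<eta>\<^sub>i \<alpha>\<^sub>i\<close>: it rises by \<open>\<bar>\<alpha>\<^sub>i\<bar>\<close> when \<open>\<eta>\<^sub>i\<close> is the hard decision and drops by \<open>\<bar>\<alpha>\<^sub>i\<bar>\<close> otherwise.
  So if \<open>\<eta>\<^sub>k\<close> disagrees with the hard decision for some \<open>k \<ge> L - 1\<close>, then correcting bit \<open>k\<close>
  lowers the metric by \<open>\<bar>\<alpha>\<^sub>k\<bar>\<close>, and additionally flipping any one of the \<open>L - 1\<close> less reliable
  bits \<open>j < L - 1\<close> raises it again by at most \<open>\<bar>\<alpha>\<^sub>j\<bar> < \<bar>\<alpha>\<^sub>k\<bar>\<close>; these are \<open>L\<close> strictly better
  candidates on the same path. A survivor has fewer than \<open>L\<close> strictly better candidates,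
  because all of them must survive as well.\<close>

definition flip_at :: "nat \<Rightarrow> real list \<Rightarrow> real list" where
  "flip_at i eta = eta[i := - (eta ! i)]"

lemma ln_one_plus_exp_diff: "ln (1 + exp x) - ln (1 + exp (- x)) = (x :: real)"
proof -
  have "1 + exp x = exp x * (1 + exp (- x))"
    by (simp add: distrib_left exp_minus)
  moreover have "0 < 1 + exp (- x)"
    by (simp add: add_pos_pos)
  ultimately show ?thesis
    by (simp add: ln_mult)
qed

lemma metric_flip_at:
  assumes "i < N" "length eta = N"
  shows "metric PM alpha N l (flip_at i eta) = metric PM alpha N l eta + eta ! i * alpha l i"
proof -
  let ?t = "\<lambda>e j. ln (1 + exp (- e * alpha l j))"
  have "(\<Sum>j<N. ?t (flip_at i eta ! j) j) = ?t (- (eta ! i)) i + (\<Sum>j\<in>{..<N}-{i}. ?t (eta ! j) j)"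
    using assms by (simp add: flip_at_def sum.remove[of "{..<N}" i])
  moreover have "(\<Sum>j<N. ?t (eta ! j) j) = ?t (eta ! i) i + (\<Sum>j\<in>{..<N}-{i}. ?t (eta ! j) j)"
    using assms by (simp add: sum.remove[of "{..<N}" i])
  ultimately show ?thesis
    unfolding metric_def using ln_one_plus_exp_diff[of "eta ! i * alpha l i"] by simp
qed

lemma length_flip_at [simp]: "length (flip_at i eta) = length eta"
  by (simp add: flip_at_def)

lemma nth_flip_at: "j < length eta \<Longrightarrow> flip_at i eta ! j = (if j = i then - (eta ! j) else eta ! j)"
  by (simp add: flip_at_def nth_list_update)

lemma cands_nth_sign:
  assumes "(l, eta) \<in> cands P N" "i < N"
  shows "eta ! i \<in> {1, -1}"
proof -
  have "length eta = N" "set eta \<subseteq> {1, -1}" using assms(1) by (auto simp: cands_def)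
  then show ?thesis using assms(2) nth_mem by blast
qed

lemma flip_at_in_cands:
  assumes "(l, eta) \<in> cands P N"
  shows "(l, flip_at i eta) \<in> cands P N"
proof (cases "i < N")
  case True
  then have "- (eta ! i) \<in> {1, -1}" using cands_nth_sign[OF assms] by auto
  then show ?thesis
    using assms set_update_subset_insert[of eta i "- (eta ! i)"] by (auto simp: cands_def flip_at_def)
qed (use assms in \<open>simp add: cands_def flip_at_def list_update_beyond\<close>)

lemma finite_cands: "finite P \<Longrightarrow> finite (cands P N)"
  by (rule finite_subset[OF _ finite_cartesian_product[of P "{eta. set eta \<subseteq> {1, -1} \<and> length eta = N}"]])
     (auto simp: cands_def finite_lists_length_eq)

lemma finite_cands_on_path: "finite {eta. (l, eta) \<in> cands P N}"
  by (rule finite_subset[OF _ finite_lists_length_eq[of "{1, -1 :: real}" N]]) (auto simp: cands_def)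

lemma flip_at_neq:
  assumes "(l, eta) \<in> cands P N" "j < N"
  shows "flip_at j eta \<noteq> eta"
proof
  assume "flip_at j eta = eta"
  then have "- (eta ! j) = eta ! j" using assms nth_flip_at[of j eta j] by (simp add: cands_def)
  then show False using cands_nth_sign[OF assms] by auto
qed

lemma flip_at_flip_at_neq:
  assumes "(l, eta) \<in> cands P N" "k < N" "j \<noteq> k"
  shows "flip_at j (flip_at k eta) \<noteq> eta"
proof
  have "length eta = N" using assms(1) by (simp add: cands_def)
  then have "flip_at j (flip_at k eta) ! k = - (eta ! k)" using assms(2,3) by (simp add: nth_flip_at)
  moreover assume "flip_at j (flip_at k eta) = eta"
  ultimately have "- (eta ! k) = eta ! k" by simp
  then show False using cands_nth_sign[OF assms(1,2)] by auto
qed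

lemma inj_on_flip_at:
  assumes "(l, eta) \<in> cands P N"
  shows "inj_on (\<lambda>j. flip_at j eta) {..<N}"
proof (rule inj_onI, rule ccontr)
  fix a b assume ab: "a \<in> {..<N}" "b \<in> {..<N}" "flip_at a eta = flip_at b eta" "a \<noteq> b"
  have len: "length eta = N" using assms by (simp add: cands_def)
  have "flip_at a eta ! a = flip_at b eta ! a" using ab(3) by simp
  then have "- (eta ! a) = eta ! a" using ab(1,4) len by (simp add: nth_flip_at)
  then show False using cands_nth_sign[OF assms, of a] ab(1) by auto
qed

lemma metric_flip_at_le:
  assumes "(l, eta) \<in> cands P N" "j < N"
  shows "metric PM alpha N l (flip_at j eta) \<le> metric PM alpha N l eta + \<bar>alpha l j\<bar>"
proof -
  have "\<bar>eta ! j\<bar> = 1" using cands_nth_sign[OF assms] by auto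
  then have "eta ! j * alpha l j \<le> \<bar>alpha l j\<bar>"
    by (metis abs_ge_self abs_mult mult_1)
  moreover have "length eta = N" using assms(1) by (simp add: cands_def)
  ultimately show ?thesis using metric_flip_at[OF assms(2), of eta PM alpha l] by simp
qed

lemma metric_flip_at_hard_decision:
  assumes "(l, eta) \<in> cands P N" "k < N" "alpha l k \<noteq> 0" "eta ! k \<noteq> sgn (alpha l k)"
  shows "metric PM alpha N l (flip_at k eta) = metric PM alpha N l eta - \<bar>alpha l k\<bar>"
proof -
  have "eta ! k = - sgn (alpha l k)"
    using cands_nth_sign[OF assms(1,2)] assms(3,4) by (auto simp: sgn_real_def)
  moreover have "length eta = N" using assms(1) by (simp add: cands_def)
  ultimately show ?thesis
    using metric_flip_at[OF assms(2), of eta PM alpha l] by (simp add: abs_sgn mult.commute)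
qed

lemma card_better_on_path_ge:
  assumes "L \<ge> 1"
    and nonzero: "\<forall>i<N. alpha l i \<noteq> 0"
    and sorted: "\<forall>i j. i < j \<and> j < N \<longrightarrow> \<bar>alpha l i\<bar> < \<bar>alpha l j\<bar>"
    and cand: "(l, eta) \<in> cands P N" and k: "L - 1 \<le> k" "k < N"
    and wrong: "eta ! k \<noteq> sgn (alpha l k)"
  shows "L \<le> card {eta'. (l, eta') \<in> cands P N \<and> eta' \<noteq> eta \<and>
                        metric PM alpha N l eta' < metric PM alpha N l eta}"
    (is "_ \<le> card ?T")
proof -
  let ?M = "metric PM alpha N l"
  define e where "e = flip_at k eta"
  define better where "better = insert e ((\<lambda>j. flip_at j e) ` {..<L - 1})"
  have e_cand: "(l, e) \<in> cands P N" using cand by (simp add: e_def flip_at_in_cands)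
  have M_e: "?M e = ?M eta - \<bar>alpha l k\<bar>"
    unfolding e_def using metric_flip_at_hard_decision[OF cand k(2)] nonzero k(2) wrong by simp
  have "e \<in> ?T"
    using e_cand flip_at_neq[OF cand k(2)] M_e nonzero k(2) by (simp add: e_def)
  moreover have "flip_at j e \<in> ?T" if "j < L - 1" for j
  proof -
    have j: "j < N" "j < k" using that k by auto
    have "\<bar>alpha l j\<bar> < \<bar>alpha l k\<bar>" using sorted j(2) k(2) by blast
    then have "?M (flip_at j e) < ?M eta"
      using metric_flip_at_le[OF e_cand j(1), of PM alpha] M_e by linarith
    then show ?thesis
      using flip_at_in_cands[OF e_cand] flip_at_flip_at_neq[OF cand k(2)] j(2) by (simp add: e_def)
  qed
  ultimately have "better \<subseteq> ?T" by (auto simp: better_def)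
  moreover have "finite ?T"
    by (rule finite_subset[OF _ finite_cands_on_path[of l P N]]) blast
  moreover have "card better = L"
  proof -
    have "inj_on (\<lambda>j. flip_at j e) {..<L - 1}"
      by (rule inj_on_subset[OF inj_on_flip_at[OF e_cand]]) (use k in auto)
    moreover have "e \<notin> (\<lambda>j. flip_at j e) ` {..<L - 1}"
    proof
      assume "e \<in> (\<lambda>j. flip_at j e) ` {..<L - 1}"
      then obtain j where "j < L - 1" "flip_at j e = e" by auto
      then show False using flip_at_neq[OF e_cand, of j] k by simp
    qed
    ultimately show ?thesis using \<open>L \<ge> 1\<close> by (simp add: better_def card_image)
  qed
  ultimately show ?thesis using card_mono[of ?T better] by simp
qed

lemma survivor_card_better_less:
  assumes surv: "survivor_set P PM alpha N L S" and "finite (cands P N)" and "c \<in> S"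
  shows "card {c' \<in> cands P N. metric PM alpha N (fst c') (snd c') < metric PM alpha N (fst c) (snd c)} < L"
    (is "card ?B < L")
proof -
  let ?m = "\<lambda>c. metric PM alpha N (fst c) (snd c)"
  have S: "S \<subseteq> cands P N" "card S \<le> L" and opt: "\<forall>c\<in>S. \<forall>c'\<in>cands P N - S. ?m c \<le> ?m c'"
    using surv by (simp_all add: survivor_set_def)
  have "?B \<subseteq> S - {c}"
  proof
    fix c' assume "c' \<in> ?B"
    then have c': "c' \<in> cands P N" "?m c' < ?m c" by simp_all
    have "c' \<in> S"
    proof (rule ccontr)
      assume "c' \<notin> S"
      then have "?m c \<le> ?m c'" using opt \<open>c \<in> S\<close> c'(1) by blast
      then show False using c'(2) by simp
    qed
    moreover have "c' \<noteq> c" using c'(2) by auto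
    ultimately show "c' \<in> S - {c}" by simp
  qed
  moreover have "finite S" using S(1) assms(2) by (rule finite_subset)
  ultimately have "card ?B \<le> card (S - {c})" by (intro card_mono) simp_all
  also have "\<dots> < card S" using \<open>finite S\<close> \<open>c \<in> S\<close> by (rule card_Diff1_less)
  finally show ?thesis using S(2) by simp
qed

theorem theorem1:
  fixes P :: "'p set" and PM :: "'p \<Rightarrow> real" and alpha :: "'p \<Rightarrow> nat \<Rightarrow> real"
    and L N :: nat
  assumes "L \<ge> 1" and "N \<ge> 1" and "finite P"
    and nonzero: "\<forall>l\<in>P. \<forall>i<N. alpha l i \<noteq> 0"
    and sorted: "\<forall>l\<in>P. \<forall>i j. i < j \<and> j < N \<longrightarrow> \<bar>alpha l i\<bar> < \<bar>alpha l j\<bar>"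
  shows "(\<forall>l eta k. (l, eta) \<in> cands P N \<and> L - 1 \<le> k \<and> k < N \<and> eta ! k \<noteq> sgn (alpha l k)
            \<longrightarrow> L \<le> card {eta'. (l, eta') \<in> cands P N \<and> eta' \<noteq> eta \<and>
                               metric PM alpha N l eta' < metric PM alpha N l eta})
       \<and> (\<forall>S. survivor_set P PM alpha N L S \<longrightarrow>
            (\<forall>(l, eta)\<in>S. \<forall>i. L - 1 \<le> i \<and> i < N \<longrightarrow> eta ! i = sgn (alpha l i)))"
    (is "?many_better \<and> ?survivors")
proof
  have many_better: "L \<le> card {eta'. (l, eta') \<in> cands P N \<and> eta' \<noteq> eta \<and>
                                   metric PM alpha N l eta' < metric PM alpha N l eta}"
    if "(l, eta) \<in> cands P N" "L - 1 \<le> k" "k < N" "eta ! k \<noteq> sgn (alpha l k)" for l eta k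
  proof -
    have "l \<in> P" using that(1) by (simp add: cands_def)
    show ?thesis
      using card_better_on_path_ge[where alpha = alpha and l = l, OF \<open>L \<ge> 1\<close> bspec[OF nonzero \<open>l \<in> P\<close>] bspec[OF sorted \<open>l \<in> P\<close>] that] .
  qed
  then show ?many_better
    by (intro allI impI, elim conjE)
  show ?survivors
  proof (intro allI impI, clarify, rule ccontr)
    fix S l eta i
    assume surv: "survivor_set P PM alpha N L S" and "(l, eta) \<in> S"
      and i: "L - 1 \<le> i" "i < N" "eta ! i \<noteq> sgn (alpha l i)"
    let ?T = "{eta'. (l, eta') \<in> cands P N \<and> eta' \<noteq> eta \<and>
                     metric PM alpha N l eta' < metric PM alpha N l eta}"
    let ?B = "{c' \<in> cands P N. metric PM alpha N (fst c') (snd c') < metric PM alpha N l eta}"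
    have "(l, eta) \<in> cands P N" using surv \<open>(l, eta) \<in> S\<close> by (auto simp: survivor_set_def)
    then have "L \<le> card ?T" using i by (rule many_better)
    also have "card ?T = card (Pair l ` ?T)" by (rule card_image[symmetric]) (simp add: inj_on_def)
    also have "\<dots> \<le> card ?B"
      by (rule card_mono) (use finite_cands[OF \<open>finite P\<close>] in auto)
    also have "\<dots> < L"
      using survivor_card_better_less[OF surv finite_cands[OF \<open>finite P\<close>] \<open>(l, eta) \<in> S\<close>]
      by (simp only: fst_conv snd_conv)
    finally show False by simp
  qed
qed

end
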